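(* Let $H$ be a fixed connected graph, $\{G_n\}$ a sequence of graphs with $N(H,G_n)>0$, and $p_n\in(0,1)$ with $\limsup_np_n<1$. Then: (a) There is a constant $c=c_H>0$ such that $\mathbb P(T(H,G_n)=0)\ge e^{-cp_n^{|V(H)|}N(H,G_n)}$ for all $n$ large enough. (b) If $\liminf_{n\to\infty}\mathbb P(T(H,G_n)=0)>0$, then $\hat N(H,G_n)$ is not consistent for $N(H,G_n)$ and $Z(H,G_n)$ is not asymptotically normal.
   Context: $G_n$ is a simple labeled graph on $V(G_n)=\{1,\dots,|V(G_n)|\}$ with adjacency $(a_{ij})$; $H=(V(H),E(H))$ with $|Aut(H)|$ automorphisms. $V(G_n)_k$ is the set of $k$-tuples of distinct vertices. $M_H(\mathbf s)=\prod_{(i,j)\in E(H)}a_{s_is_j}$, $N(H,G_n)=\frac1{|Aut(H)|}\sum_{\mathbf s\in V(G_n)_{|V(H)|}}M_H(\mathbf s)$. $\{X_v\}$ i.i.d. Bernoulli$(p_n)$, $X_{\mathbf s}=\prod_uX_{s_u}$, $T(H,G_n)=\frac1{|Aut(H)|}\sum_{\mathbf s}M_H(\mathbf s)X_{\mathbf s}$, $\hat N(H,G_n)=p_n^{-|V(H)|}T(H,G_n)$, $Z(H,G_n)=(T(H,G_n)-p_n^{|V(H)|}N(H,G_n))/\sqrt{\mathrm{Var}[T(H,G_n)]}$. Consistency: $\hat N/N\to1$ in probability; asymptotic normality: $Z\to N(0,1)$ in distribution. *)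

theory Defs
  imports "HOL-Probability.Probability" "HOL-Combinatorics.Permutations"
begin

definition simple_graph :: "nat \<Rightarrow> (nat \<Rightarrow> nat \<Rightarrow> bool) \<Rightarrow> bool" where
  "simple_graph n A \<longleftrightarrow>
     (\<forall>i j. A i j \<longrightarrow> i \<in> {1..n} \<and> j \<in> {1..n} \<and> A j i \<and> i \<noteq> j)"

definition connected_graph :: "nat \<Rightarrow> (nat \<Rightarrow> nat \<Rightarrow> bool) \<Rightarrow> bool" where
  "connected_graph k E \<longleftrightarrow> simple_graph k E \<and> 1 \<le> k \<and>
     (\<forall>u\<in>{1..k}. \<forall>v\<in>{1..k}. E\<^sup>*\<^sup>* u v)"

definition aut_count :: "nat \<Rightarrow> (nat \<Rightarrow> nat \<Rightarrow> bool) \<Rightarrow> nat" where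
  "aut_count k E = card {\<sigma>. \<sigma> permutes {1..k} \<and>
      (\<forall>i\<in>{1..k}. \<forall>j\<in>{1..k}. E (\<sigma> i) (\<sigma> j) \<longleftrightarrow> E i j)}"

definition edge_set :: "nat \<Rightarrow> (nat \<Rightarrow> nat \<Rightarrow> bool) \<Rightarrow> (nat \<times> nat) set" where
  "edge_set k E = {(i,j). i \<in> {1..k} \<and> j \<in> {1..k} \<and> i < j \<and> E i j}"

definition inj_tuples :: "nat \<Rightarrow> nat \<Rightarrow> (nat \<Rightarrow> nat) set" where
  "inj_tuples k n = {s \<in> {1..k} \<rightarrow>\<^sub>E {1..n}. inj_on s {1..k}}"

definition hom_M :: "nat \<Rightarrow> (nat \<Rightarrow> nat \<Rightarrow> bool) \<Rightarrow> (nat \<Rightarrow> nat \<Rightarrow> bool) \<Rightarrow> (nat \<Rightarrow> nat) \<Rightarrow> real" where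
  "hom_M k E A s = (\<Prod>(i,j)\<in>edge_set k E. if A (s i) (s j) then 1 else 0)"

definition sub_count :: "nat \<Rightarrow> (nat \<Rightarrow> nat \<Rightarrow> bool) \<Rightarrow> nat \<Rightarrow> (nat \<Rightarrow> nat \<Rightarrow> bool) \<Rightarrow> real" where
  "sub_count k E n A = (1 / real (aut_count k E)) * (\<Sum>s\<in>inj_tuples k n. hom_M k E A s)"

definition X_tuple :: "nat \<Rightarrow> (nat \<Rightarrow> bool) \<Rightarrow> (nat \<Rightarrow> nat) \<Rightarrow> real" where
  "X_tuple k x s = (\<Prod>u\<in>{1..k}. if x (s u) then 1 else 0)"

definition T_count :: "nat \<Rightarrow> (nat \<Rightarrow> nat \<Rightarrow> bool) \<Rightarrow> nat \<Rightarrow> (nat \<Rightarrow> nat \<Rightarrow> bool) \<Rightarrow> (nat \<Rightarrow> bool) \<Rightarrow> real" where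
  "T_count k E n A x = (1 / real (aut_count k E)) * (\<Sum>s\<in>inj_tuples k n. hom_M k E A s * X_tuple k x s)"

definition vertex_sampling :: "nat \<Rightarrow> real \<Rightarrow> (nat \<Rightarrow> bool) pmf" where
  "vertex_sampling n p = Pi_pmf {1..n} False (\<lambda>_. bernoulli_pmf p)"

definition N_hat :: "nat \<Rightarrow> (nat \<Rightarrow> nat \<Rightarrow> bool) \<Rightarrow> nat \<Rightarrow> (nat \<Rightarrow> nat \<Rightarrow> bool) \<Rightarrow> real \<Rightarrow> (nat \<Rightarrow> bool) \<Rightarrow> real" where
  "N_hat k E n A p x = T_count k E n A x / p ^ k"

definition Z_stat :: "nat \<Rightarrow> (nat \<Rightarrow> nat \<Rightarrow> bool) \<Rightarrow> nat \<Rightarrow> (nat \<Rightarrow> nat \<Rightarrow> bool) \<Rightarrow> real \<Rightarrow> (nat \<Rightarrow> bool) \<Rightarrow> real" where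
  "Z_stat k E n A p x = (T_count k E n A x - p ^ k * sub_count k E n A) /
      sqrt (measure_pmf.variance (vertex_sampling n p) (T_count k E n A))"

definition consistent_est :: "nat \<Rightarrow> (nat \<Rightarrow> nat \<Rightarrow> bool) \<Rightarrow> (nat \<Rightarrow> nat) \<Rightarrow> (nat \<Rightarrow> nat \<Rightarrow> nat \<Rightarrow> bool) \<Rightarrow> (nat \<Rightarrow> real) \<Rightarrow> bool" where
  "consistent_est k E V A p \<longleftrightarrow>
    (\<forall>\<epsilon>>0. (\<lambda>n. measure_pmf.prob (vertex_sampling (V n) (p n))
        {x. \<bar>N_hat k E (V n) (A n) (p n) x / sub_count k E (V n) (A n) - 1\<bar> > \<epsilon>}) \<longlonglongrightarrow> 0)"

definition asymp_normal :: "nat \<Rightarrow> (nat \<Rightarrow> nat \<Rightarrow> bool) \<Rightarrow> (nat \<Rightarrow> nat) \<Rightarrow> (nat \<Rightarrow> nat \<Rightarrow> nat \<Rightarrow> bool) \<Rightarrow> (nat \<Rightarrow> real) \<Rightarrow> bool" where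
  "asymp_normal k E V A p \<longleftrightarrow>
    weak_conv_m (\<lambda>n. distr (measure_pmf (vertex_sampling (V n) (p n))) borel
                       (Z_stat k E (V n) (A n) (p n)))
                (density lborel std_normal_density)"

end

theory Submission
  imports Defs
begin

text \<open>Part (a): the event \<open>T = 0\<close> is the intersection, over all injective homomorphisms \<open>s\<close> of
  \<open>H\<close> into \<open>G\<^sub>n\<close>, of the decreasing events ``some vertex of \<open>s\<close> is unsampled'', each of
  probability \<open>1 - p\<^sup>k\<close>. By the Harris (FKG) inequality for product Bernoulli measures,
  \<open>P(T = 0) \<ge> (1 - p\<^sup>k)\<^bsup>|Aut H| N\<^esup>\<close>, and \<open>1 - q \<ge> exp (- q / (1 - q\<^sub>0))\<close> for \<open>q \<le> q\<^sub>0 < 1\<close>.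

  Part (b): on \<open>T = 0\<close> the estimator \<open>N_hat\<close> vanishes and \<open>Z\<close> takes one fixed value. So both
  consistency and asymptotic normality force \<open>P(T = 0) \<rightarrow> 0\<close>; for the latter because weak
  convergence to an atomless law makes the largest atom tend to 0.\<close>

definition decreasing_event :: "('a \<Rightarrow> bool) set \<Rightarrow> bool" where
  "decreasing_event S \<longleftrightarrow> (\<forall>x\<in>S. \<forall>y\<le>x. y \<in> S)"

lemma decreasing_event_fun_upd:
  assumes "decreasing_event S"
  shows "decreasing_event {x. x(a := b) \<in> S}"
  unfolding decreasing_event_def
proof (intro ballI allI impI)
  fix x y :: "'a \<Rightarrow> bool"
  assume "x \<in> {x. x(a := b) \<in> S}" "y \<le> x"
  then have "x(a := b) \<in> S" "y(a := b) \<le> x(a := b)" by (auto simp: le_fun_def)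
  then show "y \<in> {x. x(a := b) \<in> S}" using assms unfolding decreasing_event_def by blast
qed

lemma decreasing_event_fun_upd_True_subset:
  assumes "decreasing_event S"
  shows "{x. x(a := True) \<in> S} \<subseteq> {x. x(a := False) \<in> S}"
proof
  fix x :: "'a \<Rightarrow> bool"
  assume "x \<in> {x. x(a := True) \<in> S}"
  moreover have "x(a := False) \<le> x(a := True)" by (simp add: le_fun_def)
  ultimately show "x \<in> {x. x(a := False) \<in> S}" using assms unfolding decreasing_event_def by blast
qed

lemma prob_Pi_bernoulli_insert:
  assumes "finite I" "a \<notin> I" "0 \<le> q a" "q a \<le> 1"
  defines "P J \<equiv> Pi_pmf J False (\<lambda>i. bernoulli_pmf (q i))"
  shows "measure_pmf.prob (P (insert a I)) S =
           q a * measure_pmf.prob (P I) {x. x(a := True) \<in> S}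
         + (1 - q a) * measure_pmf.prob (P I) {x. x(a := False) \<in> S}"
proof -
  have "P (insert a I) = bind_pmf (bernoulli_pmf (q a)) (\<lambda>b. map_pmf (\<lambda>x. x(a := b)) (P I))"
    using assms by (simp add: Pi_pmf_insert' map_pmf_def)
  then have "emeasure (P (insert a I)) S =
      emeasure (P I) {x. x(a := True) \<in> S} * ennreal (q a)
    + emeasure (P I) {x. x(a := False) \<in> S} * ennreal (1 - q a)"
    using assms by (simp add: emeasure_map_pmf[symmetric] vimage_def)
  then show ?thesis
    using assms by (simp add: measure_pmf.emeasure_eq_measure ennreal_mult'[symmetric]
        ennreal_plus[symmetric] del: ennreal_plus)
qed

lemma mixture_ge_product_of_mixtures:
  fixes t a b x0 x1 y0 y1 :: real
  assumes "0 \<le> t" "t \<le> 1" "a \<ge> x1 * y1" "b \<ge> x0 * y0" "x1 \<le> x0" "y1 \<le> y0"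
  shows "t * a + (1 - t) * b \<ge> (t * x1 + (1 - t) * x0) * (t * y1 + (1 - t) * y0)"
proof -
  have "(t * x1 + (1 - t) * x0) * (t * y1 + (1 - t) * y0)
      = t * (x1 * y1) + (1 - t) * (x0 * y0) - t * (1 - t) * ((x0 - x1) * (y0 - y1))"
    by (simp add: algebra_simps)
  moreover have "t * (1 - t) * ((x0 - x1) * (y0 - y1)) \<ge> 0"
    using assms by simp
  moreover have "t * (x1 * y1) \<le> t * a" "(1 - t) * (x0 * y0) \<le> (1 - t) * b"
    using assms by (simp_all add: mult_left_mono)
  ultimately show ?thesis by linarith
qed

theorem harris_inequality:
  assumes "finite I" "\<And>i. 0 \<le> q i" "\<And>i. q i \<le> 1"
    and "decreasing_event S" "decreasing_event T"
  defines "P \<equiv> Pi_pmf I False (\<lambda>i. bernoulli_pmf (q i))"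
  shows "measure_pmf.prob P S * measure_pmf.prob P T \<le> measure_pmf.prob P (S \<inter> T)"
  unfolding P_def using assms(1,4,5)
proof (induction I arbitrary: S T rule: finite_induct)
  case empty
  then show ?case by (simp add: indicator_def)
next
  case (insert a I)
  let ?pr = "measure_pmf.prob (Pi_pmf I False (\<lambda>i. bernoulli_pmf (q i)))"
  have slice_Int: "{x. x(a := b) \<in> S \<inter> T} = {x. x(a := b) \<in> S} \<inter> {x. x(a := b) \<in> T}" for b
    by auto
  have slices: "?pr {x. x(a := b) \<in> S} * ?pr {x. x(a := b) \<in> T}
      \<le> ?pr ({x. x(a := b) \<in> S} \<inter> {x. x(a := b) \<in> T})" for b
    using insert by (intro insert.IH decreasing_event_fun_upd)
  have "?pr {x. x(a := True) \<in> S} \<le> ?pr {x. x(a := False) \<in> S}"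
       "?pr {x. x(a := True) \<in> T} \<le> ?pr {x. x(a := False) \<in> T}"
    using insert.prems
    by (auto intro!: measure_pmf.finite_measure_mono decreasing_event_fun_upd_True_subset)
  then show ?case
    unfolding prob_Pi_bernoulli_insert[OF insert(1,2) assms(2,3)] slice_Int
    using mixture_ge_product_of_mixtures[OF assms(2,3) slices slices] by blast
qed

corollary prob_INTER_decreasing_ge_prod:
  assumes "finite I" "\<And>i. 0 \<le> q i" "\<And>i. q i \<le> 1"
    and "finite J" "\<And>j. j \<in> J \<Longrightarrow> decreasing_event (S j)"
  defines "P \<equiv> Pi_pmf I False (\<lambda>i. bernoulli_pmf (q i))"
  shows "(\<Prod>j\<in>J. measure_pmf.prob P (S j)) \<le> measure_pmf.prob P (\<Inter>j\<in>J. S j)"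
  using assms(4,5)
proof (induction J rule: finite_induct)
  case empty
  then show ?case by simp
next
  case (insert j J)
  have "decreasing_event (\<Inter>j\<in>J. S j)"
    using insert.prems unfolding decreasing_event_def by blast
  then have "measure_pmf.prob P (S j) * measure_pmf.prob P (\<Inter>j\<in>J. S j)
      \<le> measure_pmf.prob P (S j \<inter> (\<Inter>j\<in>J. S j))"
    unfolding P_def using assms(1-3) insert.prems by (intro harris_inequality) auto
  with insert show ?case
    by (auto intro: order_trans[OF mult_left_mono])
qed

lemma prod_of_bool:
  assumes "finite S"
  shows "(\<Prod>x\<in>S. of_bool (P x) :: 'a :: comm_semiring_1) = of_bool (\<forall>x\<in>S. P x)"
  using assms by (cases "\<forall>x\<in>S. P x") (auto intro!: prod_zero)

lemma finite_edge_set: "finite (edge_set k E)"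
  by (rule finite_subset[of _ "{1..k} \<times> {1..k}"]) (auto simp: edge_set_def)

lemma finite_inj_tuples: "finite (inj_tuples k n)"
  unfolding inj_tuples_def by (rule finite_subset[OF _ finite_PiE[of "{1..k}" "\<lambda>_. {1..n}"]]) auto

lemma aut_count_pos: "aut_count k E > 0"
proof -
  let ?Aut = "{\<sigma>. \<sigma> permutes {1..k} \<and> (\<forall>i\<in>{1..k}. \<forall>j\<in>{1..k}. E (\<sigma> i) (\<sigma> j) \<longleftrightarrow> E i j)}"
  have "finite ?Aut"
    by (rule finite_subset[OF _ finite_permutations[of "{1..k}"]]) auto
  moreover have "id \<in> ?Aut"
    by (simp add: permutes_id)
  ultimately show ?thesis
    unfolding aut_count_def by (subst card_gt_0_iff) blast
qed

definition injective_homs :: "nat \<Rightarrow> (nat \<Rightarrow> nat \<Rightarrow> bool) \<Rightarrow> nat \<Rightarrow> (nat \<Rightarrow> nat \<Rightarrow> bool) \<Rightarrow> (nat \<Rightarrow> nat) set" where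
  "injective_homs k E n A = {s \<in> inj_tuples k n. \<forall>(i, j)\<in>edge_set k E. A (s i) (s j)}"

lemma finite_injective_homs: "finite (injective_homs k E n A)"
  unfolding injective_homs_def using finite_inj_tuples by simp

lemma hom_M_eq_of_bool: "hom_M k E A s = of_bool (\<forall>(i, j)\<in>edge_set k E. A (s i) (s j))"
  unfolding hom_M_def case_prod_beta of_bool_def[symmetric]
  by (simp add: prod_of_bool[OF finite_edge_set])

lemma X_tuple_eq_of_bool: "X_tuple k x s = of_bool (\<forall>u\<in>{1..k}. x (s u))"
  unfolding X_tuple_def of_bool_def[symmetric] by (simp add: prod_of_bool)

lemma card_injective_homs: "real (card (injective_homs k E n A)) = real (aut_count k E) * sub_count k E n A"
  using aut_count_pos[of k E]
  by (simp add: sub_count_def hom_M_eq_of_bool injective_homs_def finite_inj_tuples Int_def)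

lemma T_count_eq_card:
  "T_count k E n A x =
     real (card {s \<in> injective_homs k E n A. \<forall>u\<in>{1..k}. x (s u)}) / real (aut_count k E)"
  by (simp add: T_count_def hom_M_eq_of_bool X_tuple_eq_of_bool injective_homs_def
      finite_inj_tuples Int_def of_bool_conj conj_assoc)

lemma prob_all_sampled:
  assumes "S \<subseteq> {1..n}" "0 \<le> p" "p \<le> 1"
  shows "measure_pmf.prob (vertex_sampling n p) {x. \<forall>v\<in>S. x v} = p ^ card S"
proof -
  have "{x. \<forall>v\<in>S. x v} = Pi {1..n} (\<lambda>v. if v \<in> S then {True} else UNIV)"
    using assms(1) by (auto simp: Pi_def)
  then have "measure_pmf.prob (vertex_sampling n p) {x. \<forall>v\<in>S. x v}
      = (\<Prod>v\<in>{1..n}. measure_pmf.prob (bernoulli_pmf p) (if v \<in> S then {True} else UNIV))"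
    unfolding vertex_sampling_def by (simp add: measure_Pi_pmf_Pi)
  also have "\<dots> = (\<Prod>v\<in>{1..n}. if v \<in> S then p else 1)"
    using assms by (intro prod.cong) (auto simp: measure_pmf_single)
  also have "\<dots> = p ^ card S"
    using assms(1) by (simp add: prod.If_cases Int_absorb1)
  finally show ?thesis .
qed

lemma prob_T_count_eq_0_ge:
  assumes "0 \<le> p" "p \<le> 1"
  shows "(1 - p ^ k) ^ card (injective_homs k E n A)
           \<le> measure_pmf.prob (vertex_sampling n p) {x. T_count k E n A x = 0}"
proof -
  define miss where "miss s = {x. \<not> (\<forall>v\<in>s ` {1..k}. x v)}" for s :: "nat \<Rightarrow> nat"
  have "decreasing_event (miss s)" for s
    unfolding decreasing_event_def miss_def le_fun_def le_bool_def by blast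
  then have "(\<Prod>s\<in>injective_homs k E n A. measure_pmf.prob (vertex_sampling n p) (miss s))
      \<le> measure_pmf.prob (vertex_sampling n p) (\<Inter>s\<in>injective_homs k E n A. miss s)"
    unfolding vertex_sampling_def using assms finite_injective_homs
    by (intro prob_INTER_decreasing_ge_prod) auto
  moreover have "measure_pmf.prob (vertex_sampling n p) (miss s) = 1 - p ^ k"
    if "s \<in> injective_homs k E n A" for s
  proof -
    have "s ` {1..k} \<subseteq> {1..n}" "card (s ` {1..k}) = k"
      using that by (auto simp: injective_homs_def inj_tuples_def card_image)
    then show ?thesis
      using prob_all_sampled[of "s ` {1..k}" n p] assms
        measure_pmf.prob_compl[of "{x. \<forall>v\<in>s ` {1..k}. x v}" "vertex_sampling n p"]
      by (simp add: miss_def Compl_eq_Diff_UNIV[symmetric] Collect_neg_eq[symmetric])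
  qed
  moreover have "{x. T_count k E n A x = 0} = (\<Inter>s\<in>injective_homs k E n A. miss s)"
    using aut_count_pos[of k E] finite_injective_homs[of k E n A]
    by (auto simp: T_count_eq_card miss_def)
  ultimately show ?thesis by simp
qed

lemma exp_le_one_minus_pow:
  fixes q q0 :: real
  assumes "0 \<le> q" "q \<le> q0" "q0 < 1"
  shows "exp (- (real m * q / (1 - q0))) \<le> (1 - q) ^ m"
proof -
  have "exp (q / (1 - q)) \<ge> 1 + q / (1 - q)"
    by (rule exp_ge_add_one_self)
  then have "exp (- (q / (1 - q))) \<le> 1 - q"
    using assms by (simp add: exp_minus field_simps)
  moreover have "q / (1 - q0) \<ge> q / (1 - q)"
    using assms by (intro divide_left_mono) auto
  ultimately have "exp (- (q / (1 - q0))) \<le> 1 - q"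
    by (meson exp_le_cancel_iff neg_le_iff_le order_trans)
  then have "exp (- (q / (1 - q0))) ^ m \<le> (1 - q) ^ m"
    by (intro power_mono) auto
  then show ?thesis
    by (simp add: exp_of_nat_mult[symmetric])
qed

lemma prob_T_count_eq_0_ge_exp:
  assumes "0 \<le> p" "p ^ k \<le> q0" "q0 < 1"
  shows "exp (- (real (aut_count k E) / (1 - q0)) * p ^ k * sub_count k E n A)
           \<le> measure_pmf.prob (vertex_sampling n p) {x. T_count k E n A x = 0}"
proof -
  have "p \<le> 1"
    using assms by (metis less_le_not_le not_le_imp_less one_le_power order_trans)
  have "exp (- (real (aut_count k E) / (1 - q0)) * p ^ k * sub_count k E n A)
      = exp (- (real (card (injective_homs k E n A)) * p ^ k / (1 - q0)))"
    by (simp add: card_injective_homs mult_ac)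
  also have "\<dots> \<le> (1 - p ^ k) ^ card (injective_homs k E n A)"
    using assms by (intro exp_le_one_minus_pow) auto
  also have "\<dots> \<le> measure_pmf.prob (vertex_sampling n p) {x. T_count k E n A x = 0}"
    using assms(1) \<open>p \<le> 1\<close> by (rule prob_T_count_eq_0_ge)
  finally show ?thesis .
qed

lemma (in real_distribution) measure_singleton_le_cdf_increments:
  fixes g :: "nat \<Rightarrow> real"
  assumes "cdf M (g 0) \<le> e" "1 - cdf M (g K) \<le> e"
    and "\<And>i. 0 < i \<Longrightarrow> i \<le> K \<Longrightarrow> cdf M (g i) - cdf M (g (i - 1)) \<le> e"
  shows "measure M {z} \<le> e"
proof -
  consider "z \<le> g 0" | "g K < z" | "g 0 < z" "z \<le> g K"
    by fastforce
  then show ?thesis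
  proof cases
    case 1
    then have "measure M {z} \<le> cdf M (g 0)"
      unfolding cdf_def by (intro finite_measure_mono) auto
    with assms(1) show ?thesis by linarith
  next
    case 2
    then have "measure M {z} \<le> measure M (space M - {..g K})"
      by (intro finite_measure_mono) (auto simp: borel_UNIV)
    also have "\<dots> = 1 - cdf M (g K)"
      unfolding cdf_def by (rule prob_compl) simp
    finally show ?thesis using assms(2) by linarith
  next
    case 3
    define m where "m = (LEAST i. z \<le> g i)"
    have "z \<le> g m"
      unfolding m_def using 3(2) by (rule LeastI[where P = "\<lambda>i. z \<le> g i"])
    moreover have "m \<le> K"
      unfolding m_def using 3(2) by (rule Least_le)
    moreover have "m \<noteq> 0"
      using 3(1) \<open>z \<le> g m\<close> by (metis not_le)
    moreover have "g (m - 1) < z"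
      using \<open>m \<noteq> 0\<close> not_less_Least[of "m - 1" "\<lambda>i. z \<le> g i"] by (simp add: m_def)
    ultimately have "measure M {z} \<le> measure M {g (m - 1)<..g m}"
      by (intro finite_measure_mono) auto
    also have "\<dots> = cdf M (g m) - cdf M (g (m - 1))"
      using \<open>g (m - 1) < z\<close> \<open>z \<le> g m\<close> by (simp add: cdf_diff_eq)
    finally show ?thesis
      using assms(3)[of m] \<open>m \<noteq> 0\<close> \<open>m \<le> K\<close> by linarith
  qed
qed

lemma (in real_distribution) cdf_grid_with_small_increments:
  assumes "\<And>x. measure M {x} = 0" "e > 0"
  obtains g :: "nat \<Rightarrow> real" and K where "cdf M (g 0) \<le> e" "1 - cdf M (g K) \<le> e"
    "\<And>i. 0 < i \<Longrightarrow> i \<le> K \<Longrightarrow> cdf M (g i) - cdf M (g (i - 1)) \<le> e"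
proof -
  obtain a where a: "\<And>x. x \<le> a \<Longrightarrow> cdf M x < e"
    using order_tendstoD(2)[OF cdf_lim_at_bot \<open>e > 0\<close>] by (auto simp: eventually_at_bot_linorder)
  obtain b0 where b0: "\<And>x. x \<ge> b0 \<Longrightarrow> cdf M x > 1 - e"
    using order_tendstoD(1)[OF cdf_lim_at_top_prob, of "1 - e"] \<open>e > 0\<close>
    by (auto simp: eventually_at_top_linorder)
  define b where "b = max a b0"
  have "continuous_on {a..b} (cdf M)"
    using assms(1) by (intro continuous_at_imp_continuous_on) (simp add: isCont_cdf)
  then have "uniformly_continuous_on {a..b} (cdf M)"
    by (rule compact_uniformly_continuous) simp
  then obtain h where "h > 0"
    and h: "\<And>x y. x \<in> {a..b} \<Longrightarrow> y \<in> {a..b} \<Longrightarrow> dist y x < h \<Longrightarrow> dist (cdf M y) (cdf M x) < e"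
    using \<open>e > 0\<close> unfolding uniformly_continuous_on_def by metis
  obtain K :: nat where K: "(b - a) / (h / 2) < real K"
    using reals_Archimedean2 by blast
  define g where "g i = min b (a + real i * (h / 2))" for i
  show ?thesis
  proof
    show "cdf M (g 0) \<le> e"
      using a[of a] by (simp add: g_def b_def)
    have "g K = b"
      using K \<open>h > 0\<close> by (simp add: g_def field_simps)
    then show "1 - cdf M (g K) \<le> e"
      using b0[of b] by (simp add: b_def)
  next
    fix i :: nat
    assume "0 < i" "i \<le> K"
    have "g j \<in> {a..b}" for j
      using \<open>h > 0\<close> by (simp add: g_def b_def)
    moreover have "dist (g i) (g (i - 1)) \<le> dist (a + real i * (h / 2)) (a + real (i - 1) * (h / 2))"
      unfolding g_def dist_real_def by (simp add: min_def abs_if)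
    moreover have "dist (a + real i * (h / 2)) (a + real (i - 1) * (h / 2)) < h"
      using \<open>0 < i\<close> \<open>h > 0\<close> by (simp add: dist_real_def of_nat_diff field_simps)
    ultimately have "g (i - 1) \<in> {a..b}" "g i \<in> {a..b}" "dist (g i) (g (i - 1)) < h"
      by auto
    then show "cdf M (g i) - cdf M (g (i - 1)) \<le> e"
      using h by (fastforce simp: dist_real_def)
  qed
qed

lemma weak_conv_m_imp_atoms_vanish:
  assumes "weak_conv_m \<mu> M" "\<And>n. real_distribution (\<mu> n)" "real_distribution M"
    and "\<And>x. measure M {x} = 0" "e > 0"
  shows "\<forall>\<^sub>F n in sequentially. \<forall>z. measure (\<mu> n) {z} \<le> e"
proof -
  interpret M: real_distribution M by fact
  have "e / 3 > 0"
    using \<open>e > 0\<close> by simp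
  obtain g :: "nat \<Rightarrow> real" and K where g: "cdf M (g 0) \<le> e / 3" "1 - cdf M (g K) \<le> e / 3"
    "\<And>i. 0 < i \<Longrightarrow> i \<le> K \<Longrightarrow> cdf M (g i) - cdf M (g (i - 1)) \<le> e / 3"
    using M.cdf_grid_with_small_increments[OF assms(4) \<open>e / 3 > 0\<close>] by blast
  have conv: "(\<lambda>n. cdf (\<mu> n) x) \<longlonglongrightarrow> cdf M x" for x
    using assms(1,4) by (simp add: weak_conv_m_def weak_conv_def M.isCont_cdf)
  have "\<forall>\<^sub>F n in sequentially. \<bar>cdf (\<mu> n) x - cdf M x\<bar> < e / 3" for x
    using tendstoD[OF conv \<open>e / 3 > 0\<close>] by (simp only: dist_real_def)
  then have "\<forall>\<^sub>F n in sequentially. \<forall>i\<in>{..K}. \<bar>cdf (\<mu> n) (g i) - cdf M (g i)\<bar> < e / 3"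
    by (intro eventually_ball_finite) auto
  then show ?thesis
  proof eventually_elim
    case (elim n)
    interpret real_distribution "\<mu> n" by fact
    show ?case
    proof
      fix z
      show "measure (\<mu> n) {z} \<le> e"
      proof (rule measure_singleton_le_cdf_increments)
        show "cdf (\<mu> n) (g 0) \<le> e" "1 - cdf (\<mu> n) (g K) \<le> e"
          using elim[rule_format, of 0] elim[rule_format, of K] g(1,2) \<open>e > 0\<close>
          unfolding abs_less_iff by auto
        show "cdf (\<mu> n) (g i) - cdf (\<mu> n) (g (i - 1)) \<le> e" if "0 < i" "i \<le> K" for i
        proof -
          have "i \<in> {..K}" "i - 1 \<in> {..K}"
            using that by auto
          with elim have "\<bar>cdf (\<mu> n) (g i) - cdf M (g i)\<bar> < e / 3"
            "\<bar>cdf (\<mu> n) (g (i - 1)) - cdf M (g (i - 1))\<bar> < e / 3"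
            by blast+
          with g(3)[OF that] show ?thesis
            unfolding abs_less_iff by linarith
        qed
      qed
    qed
  qed
qed

lemma std_normal_measure_singleton: "measure (density lborel std_normal_density) {x} = 0"
proof -
  have "AE y in lborel. y \<in> {x} \<longrightarrow> std_normal_density y = 0"
    using AE_lborel_singleton[of x] by eventually_elim simp
  then have "{x} \<in> null_sets (density lborel std_normal_density)"
    by (subst null_sets_density_iff) auto
  then show ?thesis
    by (simp add: measure_eq_0_null_sets)
qed

lemma eventually_prob_T_count_eq_0_ge_exp:
  assumes "k > 0" "\<And>n. 0 \<le> p n" "limsup (\<lambda>n. ereal (p n)) < 1"
  shows "\<exists>c>0. \<forall>\<^sub>F n in sequentially.
           exp (- c * p n ^ k * sub_count k E (V n) (A n))
             \<le> measure_pmf.prob (vertex_sampling (V n) (p n)) {x. T_count k E (V n) (A n) x = 0}"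
proof -
  obtain p0 where "limsup (\<lambda>n. ereal (p n)) < ereal p0" "p0 < 1"
    using ereal_dense2[OF assms(3)] by auto
  then have eventually_lt_p0: "\<forall>\<^sub>F n in sequentially. p n < p0"
    using Limsup_lessD by fastforce
  then have "0 < p0"
    using assms(2) by (metis eventually_happens' le_less_trans sequentially_bot)
  then have "p0 ^ k < 1"
    using \<open>k > 0\<close> \<open>p0 < 1\<close> by (simp add: power_less_one_iff)
  show ?thesis
  proof (intro exI conjI)
    show "real (aut_count k E) / (1 - p0 ^ k) > 0"
      using aut_count_pos \<open>p0 ^ k < 1\<close> by simp
    show "\<forall>\<^sub>F n in sequentially.
        exp (- (real (aut_count k E) / (1 - p0 ^ k)) * p n ^ k * sub_count k E (V n) (A n))
          \<le> measure_pmf.prob (vertex_sampling (V n) (p n)) {x. T_count k E (V n) (A n) x = 0}"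
      using eventually_lt_p0
    proof eventually_elim
      case (elim n)
      then have "p n ^ k \<le> p0 ^ k"
        using assms(2) by (intro power_mono) auto
      then show ?case
        using assms(2) \<open>p0 ^ k < 1\<close> by (intro prob_T_count_eq_0_ge_exp) auto
    qed
  qed
qed

lemma consistent_est_imp_prob_T_count_eq_0_tendsto_0:
  assumes "consistent_est k E V A p"
  shows "(\<lambda>n. measure_pmf.prob (vertex_sampling (V n) (p n)) {x. T_count k E (V n) (A n) x = 0}) \<longlonglongrightarrow> 0"
proof (rule tendsto_sandwich[OF _ _ tendsto_const])
  let ?far = "\<lambda>n. {x. \<bar>N_hat k E (V n) (A n) (p n) x / sub_count k E (V n) (A n) - 1\<bar> > 1 / 2}"
  show "(\<lambda>n. measure_pmf.prob (vertex_sampling (V n) (p n)) (?far n)) \<longlonglongrightarrow> 0"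
    using spec[OF assms[unfolded consistent_est_def], of "1 / 2"] by simp
  show "\<forall>\<^sub>F n in sequentially. measure_pmf.prob (vertex_sampling (V n) (p n)) {x. T_count k E (V n) (A n) x = 0}
      \<le> measure_pmf.prob (vertex_sampling (V n) (p n)) (?far n)"
    by (intro always_eventually allI measure_pmf.finite_measure_mono) (auto simp: N_hat_def)
qed simp

lemma asymp_normal_imp_prob_T_count_eq_0_tendsto_0:
  assumes "asymp_normal k E V A p"
  shows "(\<lambda>n. measure_pmf.prob (vertex_sampling (V n) (p n)) {x. T_count k E (V n) (A n) x = 0}) \<longlonglongrightarrow> 0"
proof (rule order_tendstoI)
  let ?P = "\<lambda>n. measure_pmf.prob (vertex_sampling (V n) (p n))"
  define \<mu> where "\<mu> n = distr (vertex_sampling (V n) (p n)) borel (Z_stat k E (V n) (A n) (p n))" for n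
  fix e :: real
  assume "e > 0"
  have "\<forall>\<^sub>F n in sequentially. \<forall>z. measure (\<mu> n) {z} \<le> e / 2"
  proof (rule weak_conv_m_imp_atoms_vanish)
    show "weak_conv_m \<mu> (density lborel std_normal_density)"
      using assms unfolding asymp_normal_def \<mu>_def by simp
  qed (use \<open>e > 0\<close> in \<open>auto simp: \<mu>_def real_dist_normal_dist std_normal_measure_singleton
        intro: prob_space.real_distribution_distr[OF prob_space_measure_pmf]\<close>)
  then show "\<forall>\<^sub>F n in sequentially. ?P n {x. T_count k E (V n) (A n) x = 0} < e"
  proof eventually_elim
    case (elim n)
    let ?z = "(0 - p n ^ k * sub_count k E (V n) (A n)) /
      sqrt (measure_pmf.variance (vertex_sampling (V n) (p n)) (T_count k E (V n) (A n)))"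
    have "?P n {x. T_count k E (V n) (A n) x = 0} \<le> ?P n {x. Z_stat k E (V n) (A n) (p n) x = ?z}"
      by (intro measure_pmf.finite_measure_mono) (auto simp: Z_stat_def)
    also have "\<dots> = measure (\<mu> n) {?z}"
      by (simp add: \<mu>_def measure_distr vimage_def)
    also have "\<dots> \<le> e / 2"
      using elim by blast
    also have "\<dots> < e"
      using \<open>e > 0\<close> by simp
    finally show ?case .
  qed
next
  fix a :: real
  assume "a < 0"
  then show "\<forall>\<^sub>F n in sequentially. a < measure_pmf.prob (vertex_sampling (V n) (p n)) {x. T_count k E (V n) (A n) x = 0}"
    by (intro always_eventually allI) (simp add: less_le_trans[OF _ measure_nonneg])
qed

theorem lemma6p1:
  fixes k :: nat and EH :: "nat \<Rightarrow> nat \<Rightarrow> bool"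
    and V :: "nat \<Rightarrow> nat" and A :: "nat \<Rightarrow> nat \<Rightarrow> nat \<Rightarrow> bool" and p :: "nat \<Rightarrow> real"
  assumes H: "connected_graph k EH"
    and G: "\<And>n. simple_graph (V n) (A n)"
    and Npos: "\<And>n. sub_count k EH (V n) (A n) > 0"
    and p01: "\<And>n. 0 < p n \<and> p n < 1"
    and plim: "limsup (\<lambda>n. ereal (p n)) < 1"
  shows "(\<exists>c>0. \<forall>\<^sub>F n in sequentially.
            measure_pmf.prob (vertex_sampling (V n) (p n)) {x. T_count k EH (V n) (A n) x = 0}
              \<ge> exp (- c * p n ^ k * sub_count k EH (V n) (A n)))
       \<and> (liminf (\<lambda>n. ereal (measure_pmf.prob (vertex_sampling (V n) (p n))
                 {x. T_count k EH (V n) (A n) x = 0})) > 0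
          \<longrightarrow> \<not> consistent_est k EH V A p \<and> \<not> asymp_normal k EH V A p)"
proof
  have "k > 0"
    using H by (simp add: connected_graph_def)
  then show "\<exists>c>0. \<forall>\<^sub>F n in sequentially.
      measure_pmf.prob (vertex_sampling (V n) (p n)) {x. T_count k EH (V n) (A n) x = 0}
        \<ge> exp (- c * p n ^ k * sub_count k EH (V n) (A n))"
    using eventually_prob_T_count_eq_0_ge_exp[of k p] p01 plim by (simp add: less_imp_le)
  let ?P = "\<lambda>n. measure_pmf.prob (vertex_sampling (V n) (p n)) {x. T_count k EH (V n) (A n) x = 0}"
  have "liminf (\<lambda>n. ereal (?P n)) = 0" if "?P \<longlonglongrightarrow> 0"
    using that by (simp add: lim_imp_Liminf zero_ereal_def)
  then show "liminf (\<lambda>n. ereal (?P n)) > 0 \<longrightarrow> \<not> consistent_est k EH V A p \<and> \<not> asymp_normal k EH V A p"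
    using consistent_est_imp_prob_T_count_eq_0_tendsto_0 asymp_normal_imp_prob_T_count_eq_0_tendsto_0
    by force
qed

end
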